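(* Fix $p\in[\tfrac23,1)$. Let $\Phi=\Phi_{\mathsf{Even}}=\sum_{v\in\mathsf{Even}}2^{-N_p(v)}$ and $\mathsf{Window}=\{m\in\mathbb Z_{\ge0}: |m-\mu_p|\le\mu_p^{0.6}\}$. Then, as $d\to\infty$, \[ \frac{\sum_{m\notin\mathsf{Window}}\frac{\Phi^m}{m!}}{\sigma_p\exp(\mu_p)}\xrightarrow{\mathbb P}0 \qquad\text{and}\qquad \frac{\sum_{m\notin\mathsf{Window}}\sum_{S\in\mathsf{Good}^{\mathsf{Even}}_m}2^{-N_p(S)}}{\sigma_p\exp(\mu_p)}\xrightarrow{\mathbb P}0 . \] The same holds with $\mathsf{Even}$ replaced by $\mathsf{Odd}$.
   Context: Setup and notation: - $Q_d=\{0,1\}^d$ is the hypercube graph. - $\mathsf{Even}$ and $\mathsf{Odd}$ are the vertices of even and odd Hamming weight. - $Q_{d,p}$ is obtained by retaining each edge independently with probability $p$. - $N_p(v)$ is the number of neighbors of $v$ in $Q_{d,p}$; for $S$ within one side, $N_p(S)$ is the number of vertices adjacent in $Q_{d,p}$ to some vertex of $S$. - Two same-side vertices are $2$-neighbors if they have a common neighbor in $Q_d$. - $\mathsf{Good}^{\mathsf{Even}}_m$ is the collection of $S\subseteq\mathsf{Even}$ with $|S|=m\le 2^d/d^2$ and no two elements being $2$-neighbors. - $\mu_p=\tfrac12(2-p)^d$ and $\sigma_p^2=\tfrac12(\tfrac{4-3p}{2})^d$. *)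

theory Defs
  imports "HOL-Probability.Probability"
begin

text \<open>Vertices of Q_d are the subsets of {..<d} (indicator sets of 0/1 vectors);
  the Hamming weight is the cardinality.\<close>

definition vertices :: "nat \<Rightarrow> nat set set" where
  "vertices d = Pow {..<d}"

definition hadj :: "nat \<Rightarrow> nat set \<Rightarrow> nat set \<Rightarrow> bool" where
  "hadj d u v \<longleftrightarrow> u \<in> vertices d \<and> v \<in> vertices d \<and> card ((u - v) \<union> (v - u)) = 1"

definition edges :: "nat \<Rightarrow> nat set set set" where
  "edges d = {{u, v} | u v. hadj d u v}"

text \<open>Side of the bipartition: True = Even, False = Odd.\<close>
definition side :: "nat \<Rightarrow> bool \<Rightarrow> nat set set" where
  "side d b = {v \<in> vertices d. even (card v) = b}"

definition Qdp :: "nat \<Rightarrow> real \<Rightarrow> (nat set set \<Rightarrow> bool) pmf" where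
  "Qdp d p = Pi_pmf (edges d) False (\<lambda>_. bernoulli_pmf p)"

definition Np :: "nat \<Rightarrow> (nat set set \<Rightarrow> bool) \<Rightarrow> nat set \<Rightarrow> nat" where
  "Np d \<omega> v = card {u. {u, v} \<in> edges d \<and> \<omega> {u, v}}"

definition NpS :: "nat \<Rightarrow> (nat set set \<Rightarrow> bool) \<Rightarrow> nat set set \<Rightarrow> nat" where
  "NpS d \<omega> S = card {u. \<exists>v\<in>S. {u, v} \<in> edges d \<and> \<omega> {u, v}}"

definition two_nbrs :: "nat \<Rightarrow> nat set \<Rightarrow> nat set \<Rightarrow> bool" where
  "two_nbrs d u v \<longleftrightarrow> (\<exists>w. hadj d u w \<and> hadj d v w)"

definition Good :: "nat \<Rightarrow> bool \<Rightarrow> nat \<Rightarrow> nat set set set" where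
  "Good d b m = {S. S \<subseteq> side d b \<and> card S = m \<and> real m \<le> 2 ^ d / real d ^ 2 \<and>
     (\<forall>u\<in>S. \<forall>v\<in>S. u \<noteq> v \<longrightarrow> \<not> two_nbrs d u v)}"

definition mu :: "real \<Rightarrow> nat \<Rightarrow> real" where
  "mu p d = (1/2) * (2 - p) ^ d"

definition sigma :: "real \<Rightarrow> nat \<Rightarrow> real" where
  "sigma p d = sqrt ((1/2) * ((4 - 3 * p) / 2) ^ d)"

definition Window :: "real \<Rightarrow> nat \<Rightarrow> nat set" where
  "Window p d = {m. \<bar>real m - mu p d\<bar> \<le> mu p d powr 0.6}"

definition Phi :: "nat \<Rightarrow> bool \<Rightarrow> (nat set set \<Rightarrow> bool) \<Rightarrow> real" where
  "Phi d b \<omega> = (\<Sum>v\<in>side d b. 1 / 2 ^ Np d \<omega> v)"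

definition X1 :: "real \<Rightarrow> nat \<Rightarrow> bool \<Rightarrow> (nat set set \<Rightarrow> bool) \<Rightarrow> real" where
  "X1 p d b \<omega> = (\<Sum>m. if m \<notin> Window p d then Phi d b \<omega> ^ m / fact m else 0)
                  / (sigma p d * exp (mu p d))"

definition X2 :: "real \<Rightarrow> nat \<Rightarrow> bool \<Rightarrow> (nat set set \<Rightarrow> bool) \<Rightarrow> real" where
  "X2 p d b \<omega> = (\<Sum>m. if m \<notin> Window p d then (\<Sum>S\<in>Good d b m. 1 / 2 ^ NpS d \<omega> S) else 0)
                  / (sigma p d * exp (mu p d))"

end

theory Submission
  imports Defs "HOL-Real_Asymp.Real_Asymp"
begin

text \<open>
  Distinct vertices on one side of the bipartition share no edge, so the weights \<open>2^-N_p(v)\<close>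
  are pairwise uncorrelated: \<open>\<Phi>\<close> has mean at most \<open>\<mu>_p\<close> and variance at most
  \<open>((4 - 3p)/2)^d / 2 \<le> 1/2\<close> for \<open>p \<ge> 2/3\<close>. By Chebyshev, \<open>\<Phi> \<le> \<mu>_p + \<mu>_p^0.2/16\<close>
  except with probability \<open>O(\<mu>_p^-0.4)\<close>. On that event, exponential tilting of the series
  \<open>\<Sigma> \<Phi>^m/m!\<close> bounds its part outside the window by \<open>2 exp(\<mu>_p - \<mu>_p^0.2/8)\<close>, which is
  \<open>o(\<sigma>_p exp \<mu>_p)\<close> because \<open>\<mu>_p^0.2\<close> grows exponentially in \<open>d\<close> while \<open>log \<sigma>_p\<close> is linear.
  For \<open>S \<in> Good_m\<close> the neighbourhoods of the vertices of \<open>S\<close> are disjoint, so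
  \<open>2^-N_p(S) = \<Prod>_{v\<in>S} 2^-N_p(v)\<close> and the sum over \<open>Good_m\<close> is at most the elementary
  symmetric sum of the weights, hence at most \<open>\<Phi>^m/m!\<close>: the second ratio is dominated by the first.
\<close>

section \<open>Elementary symmetric sums\<close>

lemma sum_card_subsets_insert:
  fixes f :: "'a set \<Rightarrow> 'b::semiring_1"
  assumes "finite V"
  shows "(\<Sum>T | T \<subseteq> V \<and> card T = m. \<Sum>v\<in>V - T. f (insert v T))
       = of_nat (Suc m) * (\<Sum>S | S \<subseteq> V \<and> card S = Suc m. f S)"
proof -
  define K where "K k = {S. S \<subseteq> V \<and> card S = k}" for k
  have fin_K: "finite (K k)" for k
    using assms by (simp add: K_def)
  have fin_S: "finite S" if "S \<in> K k" for S k
    using that assms finite_subset by (auto simp: K_def)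
  have "(\<Sum>T\<in>K m. \<Sum>v\<in>V - T. f (insert v T)) = (\<Sum>(T, v)\<in>Sigma (K m) (\<lambda>T. V - T). f (insert v T))"
    using fin_K assms by (intro sum.Sigma) auto
  also have "\<dots> = (\<Sum>(S, v)\<in>Sigma (K (Suc m)) (\<lambda>S. S). f S)"
  proof (rule sum.reindex_bij_witness[where i = "\<lambda>(S, v). (S - {v}, v)" and j = "\<lambda>(T, v). (insert v T, v)"])
    fix Tv
    assume "Tv \<in> Sigma (K m) (\<lambda>T. V - T)"
    then obtain T v where Tv: "Tv = (T, v)" "T \<in> K m" "v \<in> V" "v \<notin> T"
      by blast
    with fin_S have "finite T"
      by blast
    with Tv show "(case (case Tv of (T, v) \<Rightarrow> (insert v T, v)) of (S, v) \<Rightarrow> (S - {v}, v)) = Tv"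
      and "(case Tv of (T, v) \<Rightarrow> (insert v T, v)) \<in> Sigma (K (Suc m)) (\<lambda>S. S)"
      by (auto simp: K_def)
  next
    fix Sv
    assume "Sv \<in> Sigma (K (Suc m)) (\<lambda>S. S)"
    then obtain S v where Sv: "Sv = (S, v)" "S \<in> K (Suc m)" "v \<in> S"
      by blast
    with fin_S have "finite S"
      by blast
    with Sv show "(case (case Sv of (S, v) \<Rightarrow> (S - {v}, v)) of (T, v) \<Rightarrow> (insert v T, v)) = Sv"
      and "(case Sv of (S, v) \<Rightarrow> (S - {v}, v)) \<in> Sigma (K m) (\<lambda>T. V - T)"
      by (auto simp: K_def insert_Diff card_Diff_singleton)
  qed clarsimp
  also have "\<dots> = (\<Sum>S\<in>K (Suc m). \<Sum>v\<in>S. f S)"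
    using fin_K fin_S by (intro sum.Sigma[symmetric]) auto
  also have "\<dots> = of_nat (Suc m) * (\<Sum>S\<in>K (Suc m). f S)"
    unfolding sum_distrib_left by (rule sum.cong) (auto simp: K_def)
  finally show ?thesis
    unfolding K_def .
qed

lemma sum_prod_card_subsets_le:
  fixes a :: "'a \<Rightarrow> real"
  assumes "finite V" and nonneg: "\<And>v. v \<in> V \<Longrightarrow> 0 \<le> a v"
  shows "(\<Sum>S | S \<subseteq> V \<and> card S = m. \<Prod>v\<in>S. a v) \<le> (\<Sum>v\<in>V. a v) ^ m / fact m"
proof (induction m)
  case 0
  have "{S. S \<subseteq> V \<and> card S = 0} = {{}}"
    using assms(1) by (auto dest: finite_subset)
  then show ?case
    by simp
next
  case (Suc m)
  let ?e = "\<lambda>k. \<Sum>S | S \<subseteq> V \<and> card S = k. \<Prod>v\<in>S. a v"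
  have "real (Suc m) * ?e (Suc m) = (\<Sum>T | T \<subseteq> V \<and> card T = m. \<Sum>v\<in>V - T. \<Prod>u\<in>insert v T. a u)"
    using sum_card_subsets_insert[OF assms(1), where m = m and f = "\<lambda>S. \<Prod>u\<in>S. a u"] by simp
  also have "\<dots> \<le> (\<Sum>T | T \<subseteq> V \<and> card T = m. \<Sum>v\<in>V. (\<Prod>u\<in>T. a u) * a v)"
  proof (rule sum_mono)
    fix T
    assume T: "T \<in> {T. T \<subseteq> V \<and> card T = m}"
    then have "finite T"
      using assms(1) finite_subset by blast
    then have "(\<Sum>v\<in>V - T. \<Prod>u\<in>insert v T. a u) = (\<Sum>v\<in>V - T. (\<Prod>u\<in>T. a u) * a v)"
      by (simp add: mult.commute)
    also have "\<dots> \<le> (\<Sum>v\<in>V. (\<Prod>u\<in>T. a u) * a v)"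
      using T nonneg assms(1) by (intro sum_mono2) (auto intro!: prod_nonneg mult_nonneg_nonneg)
    finally show "(\<Sum>v\<in>V - T. \<Prod>u\<in>insert v T. a u) \<le> (\<Sum>v\<in>V. (\<Prod>u\<in>T. a u) * a v)" .
  qed
  also have "\<dots> = ?e m * (\<Sum>v\<in>V. a v)"
    unfolding sum_distrib_right by (simp add: sum_distrib_left)
  also have "\<dots> \<le> (\<Sum>v\<in>V. a v) ^ m / fact m * (\<Sum>v\<in>V. a v)"
    using Suc.IH nonneg by (intro mult_right_mono sum_nonneg) auto
  finally have "?e (Suc m) \<le> (\<Sum>v\<in>V. a v) ^ m / fact m * (\<Sum>v\<in>V. a v) / real (Suc m)"
    by (subst pos_le_divide_eq) (simp_all add: mult.commute)
  also have "\<dots> = (\<Sum>v\<in>V. a v) ^ Suc m / fact (Suc m)"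
    by (simp add: fact_Suc mult.commute)
  finally show ?case .
qed
section \<open>Tails of the exponential series\<close>

lemma exp_minus_le_quadratic:
  fixes s :: real
  assumes "0 \<le> s"
  shows "exp (- s) \<le> 1 - s + s\<^sup>2"
proof -
  have "1 \<le> (1 + s) * (1 - s + s\<^sup>2)"
    using assms by (simp add: algebra_simps power2_eq_square power3_eq_cube)
  also have "\<dots> \<le> exp s * (1 - s + s\<^sup>2)"
  proof (rule mult_right_mono)
    have "0 \<le> (s - 1 / 2)\<^sup>2 + 3 / 4"
      by simp
    then show "0 \<le> 1 - s + s\<^sup>2"
      by (simp add: power2_eq_square algebra_simps)
  qed (rule exp_ge_add_one_self)
  finally show ?thesis
    by (simp add: exp_minus field_simps)
qed

lemma exp_series_sums: "(\<lambda>m. x ^ m / fact m) sums exp (x :: real)"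
  using exp_converges[of x] by (simp add: divide_inverse mult.commute)

lemma summable_exp_series_if: "summable (\<lambda>m. if P m then x ^ m / fact m else 0 :: real)"
proof (rule summable_comparison_test')
  show "summable (\<lambda>m. \<bar>x\<bar> ^ m / fact m)"
    using exp_series_sums sums_summable by blast
qed (simp add: power_abs)

lemma exp_series_if_le:
  fixes x t K :: real
  assumes "0 \<le> x" "0 \<le> t" "0 \<le> K" and "\<And>m. P m \<Longrightarrow> 1 \<le> t ^ m * K"
  shows "(\<Sum>m. if P m then x ^ m / fact m else 0) \<le> exp (t * x) * K"
proof -
  have sums: "(\<lambda>m. (t * x) ^ m / fact m * K) sums (exp (t * x) * K)"
    by (intro sums_mult2 exp_series_sums)
  have termwise: "(if P m then x ^ m / fact m else 0) \<le> (t * x) ^ m / fact m * K" for m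
  proof (cases "P m")
    case True
    have "x ^ m / fact m * 1 \<le> x ^ m / fact m * (t ^ m * K)"
      using assms(1) assms(4)[OF True] by (intro mult_left_mono) auto
    also have "\<dots> = (t * x) ^ m / fact m * K"
      by (simp add: power_mult_distrib)
    finally show ?thesis
      using True by simp
  next
    case False
    then show ?thesis
      using assms(1-3) by simp
  qed
  have "(\<Sum>m. if P m then x ^ m / fact m else 0) \<le> (\<Sum>m. (t * x) ^ m / fact m * K)"
    by (rule suminf_le[OF termwise summable_exp_series_if sums_summable[OF sums]])
  also have "\<dots> = exp (t * x) * K"
    using sums by (rule sums_unique[symmetric])
  finally show ?thesis .
qed

lemma exp_series_above_le:
  fixes x s a :: real
  assumes "0 \<le> x" "0 \<le> s"
  shows "(\<Sum>m. if a < real m then x ^ m / fact m else 0) \<le> exp (exp s * x - s * a)"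
proof -
  have "(\<Sum>m. if a < real m then x ^ m / fact m else 0) \<le> exp (exp s * x) * exp (- (s * a))"
  proof (rule exp_series_if_le)
    fix m
    assume "a < real m"
    then have "s * a \<le> s * real m"
      using assms(2) by (intro mult_left_mono) auto
    then show "1 \<le> exp s ^ m * exp (- (s * a))"
      by (simp add: mult.commute flip: exp_of_nat_mult exp_add)
  qed (use assms in auto)
  then show ?thesis
    by (simp flip: exp_add)
qed

lemma exp_series_below_le:
  fixes x s a :: real
  assumes "0 \<le> x" "0 \<le> s"
  shows "(\<Sum>m. if real m < a then x ^ m / fact m else 0) \<le> exp (exp (- s) * x + s * a)"
proof -
  have "(\<Sum>m. if real m < a then x ^ m / fact m else 0) \<le> exp (exp (- s) * x) * exp (s * a)"
  proof (rule exp_series_if_le)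
    fix m
    assume "real m < a"
    then have "s * real m \<le> s * a"
      using assms(2) by (intro mult_left_mono) auto
    then show "1 \<le> exp (- s) ^ m * exp (s * a)"
      by (simp add: mult.commute flip: exp_of_nat_mult exp_add)
  qed (use assms in auto)
  then show ?thesis
    by (simp add: exp_add)
qed

lemma exp_series_outside_window_le:
  fixes \<mu> \<delta> x :: real
  assumes "0 < \<delta>" "\<delta> \<le> \<mu>" "0 \<le> x" "x \<le> \<mu> + \<delta>\<^sup>2 / (16 * \<mu>)"
  shows "(\<Sum>m. if \<delta> < \<bar>real m - \<mu>\<bar> then x ^ m / fact m else 0) \<le> 2 * exp (\<mu> - \<delta>\<^sup>2 / (8 * \<mu>))"
proof -
  define s where "s = \<delta> / (2 * \<mu>)"
  define \<eta> where "\<eta> = \<delta>\<^sup>2 / (16 * \<mu>)"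
  have "0 < \<mu>"
    using assms(1,2) by linarith
  then have s: "0 \<le> s" "s \<le> 1 / 2" and s_mu: "s * \<mu> = \<delta> / 2" "s\<^sup>2 * \<mu> = 4 * \<eta>" "s * \<delta> = 8 * \<eta>"
    using assms(1,2) by (simp_all add: s_def \<eta>_def field_simps power2_eq_square)
  have "0 \<le> \<eta>"
    using \<open>0 < \<mu>\<close> by (simp add: \<eta>_def)
  have x_le: "x \<le> \<mu> + \<eta>"
    using assms(4) by (simp add: \<eta>_def)
  have "exp s * x - s * (\<mu> + \<delta>) \<le> \<mu> - 2 * \<eta>"
  proof -
    have exp_s: "exp s \<le> 1 + s + s\<^sup>2"
      using s by (intro exp_bound) auto
    have "s\<^sup>2 \<le> 1 / 4"
      using s power_mono[of s "1 / 2" 2] by (simp add: power2_eq_square)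
    with s exp_s have "exp s \<le> 2"
      by linarith
    have "exp s * x \<le> exp s * \<mu> + exp s * \<eta>"
      using x_le by (simp flip: distrib_left)
    also have "\<dots> \<le> (1 + s + s\<^sup>2) * \<mu> + 2 * \<eta>"
      using exp_s \<open>exp s \<le> 2\<close> \<open>0 < \<mu>\<close> \<open>0 \<le> \<eta>\<close> by (intro add_mono mult_right_mono) auto
    finally show ?thesis
      using s_mu by (simp add: algebra_simps)
  qed
  then have above: "(\<Sum>m. if \<mu> + \<delta> < real m then x ^ m / fact m else 0) \<le> exp (\<mu> - 2 * \<eta>)"
    using exp_series_above_le[OF assms(3) s(1), of "\<mu> + \<delta>"] by (meson exp_le_cancel_iff order_trans)
  have "exp (- s) * x + s * (\<mu> - \<delta>) \<le> \<mu> - 2 * \<eta>"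
  proof -
    have "exp (- s) * x \<le> exp (- s) * \<mu> + exp (- s) * \<eta>"
      using x_le by (simp flip: distrib_left)
    also have "\<dots> \<le> (1 - s + s\<^sup>2) * \<mu> + 1 * \<eta>"
      using s \<open>0 < \<mu>\<close> \<open>0 \<le> \<eta>\<close> exp_minus_le_quadratic[of s]
      by (intro add_mono mult_right_mono) auto
    finally show ?thesis
      using s_mu \<open>0 \<le> \<eta>\<close> by (simp add: algebra_simps)
  qed
  then have below: "(\<Sum>m. if real m < \<mu> - \<delta> then x ^ m / fact m else 0) \<le> exp (\<mu> - 2 * \<eta>)"
    using exp_series_below_le[OF assms(3) s(1), of "\<mu> - \<delta>"] by (meson exp_le_cancel_iff order_trans)
  have "(if \<delta> < \<bar>real m - \<mu>\<bar> then x ^ m / fact m else 0)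
      = (if \<mu> + \<delta> < real m then x ^ m / fact m else 0) + (if real m < \<mu> - \<delta> then x ^ m / fact m else 0)" for m
    using assms(1) by auto
  then have "(\<Sum>m. if \<delta> < \<bar>real m - \<mu>\<bar> then x ^ m / fact m else 0)
      = (\<Sum>m. if \<mu> + \<delta> < real m then x ^ m / fact m else 0) + (\<Sum>m. if real m < \<mu> - \<delta> then x ^ m / fact m else 0)"
    by (simp only: suminf_add[OF summable_exp_series_if summable_exp_series_if])
  also have "\<dots> \<le> 2 * exp (\<mu> - 2 * \<eta>)"
    using above below by simp
  finally show ?thesis
    by (simp add: \<eta>_def)
qed

section \<open>The hypercube\<close>

lemma finite_vertices: "finite (vertices d)"
  by (simp add: vertices_def)

lemma finite_edges: "finite (edges d)"
proof -
  have "edges d \<subseteq> Pow (vertices d)"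
    by (auto simp: edges_def hadj_def)
  then show ?thesis
    using finite_vertices finite_subset by blast
qed

lemma side_subset_vertices: "side d b \<subseteq> vertices d"
  by (auto simp: side_def)

lemma finite_side: "finite (side d b)"
  using finite_subset[OF side_subset_vertices finite_vertices] .

lemma hadj_sym: "hadj d u v \<Longrightarrow> hadj d v u"
  unfolding hadj_def by (simp add: Un_commute)

lemma hadj_odd_card_add:
  assumes "hadj d u v"
  shows "odd (card u + card v)"
proof -
  have "finite u" "finite v"
    using assms by (auto simp: hadj_def vertices_def intro: finite_subset)
  then have "card ((u - v) \<union> (v - u)) = card (u - v) + card (v - u)"
    by (intro card_Un_disjoint) auto
  with \<open>finite u\<close> \<open>finite v\<close> have "card u + card v = 2 * card (u \<inter> v) + card ((u - v) \<union> (v - u))"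
    using card_Int_Diff[of u v] card_Int_Diff[of v u] by (simp add: Int_commute)
  then show ?thesis
    using assms by (simp add: hadj_def)
qed

lemma edge_imp_hadj: "{u, v} \<in> edges d \<Longrightarrow> hadj d u v"
  by (auto simp: edges_def doubleton_eq_iff intro: hadj_sym)

lemma edge_not_within_side:
  assumes "v \<in> side d b" "w \<in> side d b" "v \<noteq> w" "e \<in> edges d"
  shows "\<not> (v \<in> e \<and> w \<in> e)"
proof
  assume "v \<in> e \<and> w \<in> e"
  with assms(3,4) have "e = {v, w}"
    by (auto simp: edges_def)
  then have "odd (card v + card w)"
    using assms(4) edge_imp_hadj hadj_odd_card_add by metis
  with assms(1,2) show False
    by (auto simp: side_def)
qed

definition flip_coord :: "nat \<Rightarrow> nat set \<Rightarrow> nat set" where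
  "flip_coord i v = (v - {i}) \<union> ({i} - v)"

lemma flip_coord_flip_coord [simp]: "flip_coord i (flip_coord i v) = v"
  by (auto simp: flip_coord_def)

lemma hadj_flip_coord:
  assumes "v \<in> vertices d" "i < d"
  shows "hadj d (flip_coord i v) v"
proof -
  have "(flip_coord i v - v) \<union> (v - flip_coord i v) = {i}"
    by (auto simp: flip_coord_def)
  then show ?thesis
    using assms by (auto simp: hadj_def vertices_def flip_coord_def)
qed

definition incident :: "nat \<Rightarrow> nat set \<Rightarrow> nat set set set" where
  "incident d v = {e \<in> edges d. v \<in> e}"

lemma incident_subset_edges: "incident d v \<subseteq> edges d"
  by (auto simp: incident_def)

lemma card_incident_ge:
  assumes "v \<in> vertices d"
  shows "d \<le> card (incident d v)"
proof -
  have "inj_on (\<lambda>i. {flip_coord i v, v}) {..<d}"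
  proof (rule inj_onI)
    fix i j
    assume "{flip_coord i v, v} = {flip_coord j v, v}"
    then have "flip_coord i v = flip_coord j v"
      by (auto simp: doubleton_eq_iff flip_coord_def)
    then show "i = j"
      by (auto simp: flip_coord_def set_eq_iff)
  qed
  moreover have "(\<lambda>i. {flip_coord i v, v}) ` {..<d} \<subseteq> incident d v"
  proof
    fix e
    assume "e \<in> (\<lambda>i. {flip_coord i v, v}) ` {..<d}"
    then obtain i where i: "i < d" "e = {flip_coord i v, v}"
      by blast
    with hadj_flip_coord[OF assms i(1)] show "e \<in> incident d v"
      unfolding incident_def edges_def by blast
  qed
  moreover have "finite (incident d v)"
    using finite_edges by (simp add: incident_def)
  ultimately show ?thesis
    using card_inj_on_le by fastforce
qed

lemma card_side:
  assumes "1 \<le> d"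
  shows "2 * card (side d b) = 2 ^ d"
proof -
  have flip_coord_side: "flip_coord 0 v \<in> side d (\<not> c)" if "v \<in> side d c" for v c
    using that assms hadj_flip_coord[of v d 0] hadj_odd_card_add[of d "flip_coord 0 v" v]
    by (auto simp: side_def hadj_def)
  have "bij_betw (flip_coord 0) (side d b) (side d (\<not> b))"
    by (rule bij_betw_byWitness[where f' = "flip_coord 0"]) (use flip_coord_side in force)+
  then have "card (side d b) = card (side d (\<not> b))"
    by (rule bij_betw_same_card)
  moreover have "vertices d = side d b \<union> side d (\<not> b)" "side d b \<inter> side d (\<not> b) = {}"
    by (auto simp: side_def)
  then have "card (vertices d) = card (side d b) + card (side d (\<not> b))"
    by (simp add: card_Un_disjoint finite_side)
  moreover have "card (vertices d) = 2 ^ d"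
    by (simp add: vertices_def card_Pow)
  ultimately show ?thesis
    by simp
qed

lemma sum_side_power_card_incident_le:
  fixes q :: real
  assumes "0 \<le> q" "q \<le> 1" "1 \<le> d"
  shows "(\<Sum>v\<in>side d b. q ^ card (incident d v)) \<le> (2 * q) ^ d / 2"
proof -
  have "(\<Sum>v\<in>side d b. q ^ card (incident d v)) \<le> (\<Sum>v\<in>side d b. q ^ d)"
    using assms(1,2) side_subset_vertices
    by (intro sum_mono power_decreasing card_incident_ge) auto
  also have "\<dots> = real (2 * card (side d b)) * q ^ d / 2"
    by simp
  also have "\<dots> = (2 * q) ^ d / 2"
    by (simp only: card_side[OF assms(3)]) (simp add: power_mult_distrib)
  finally show ?thesis .
qed

lemma Np_eq_card_incident: "Np d \<omega> v = card {e \<in> incident d v. \<omega> e}"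
proof -
  have "{e \<in> incident d v. \<omega> e} = (\<lambda>u. {u, v}) ` {u. {u, v} \<in> edges d \<and> \<omega> {u, v}}"
  proof (intro equalityI subsetI)
    fix e
    assume e: "e \<in> {e \<in> incident d v. \<omega> e}"
    then obtain x y where "e = {x, y}"
      by (auto simp: incident_def edges_def)
    with e have "e = {if v = x then y else x, v}"
      by (auto simp: incident_def)
    with e show "e \<in> (\<lambda>u. {u, v}) ` {u. {u, v} \<in> edges d \<and> \<omega> {u, v}}"
      by (auto simp: incident_def)
  qed (auto simp: incident_def)
  moreover have "inj_on (\<lambda>u. {u, v}) {u. {u, v} \<in> edges d \<and> \<omega> {u, v}}"
    by (auto simp: inj_on_def doubleton_eq_iff)
  ultimately show ?thesis
    by (simp add: Np_def card_image)
qed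

lemma NpS_eq_sum_Np:
  assumes "S \<in> Good d b m"
  shows "NpS d \<omega> S = (\<Sum>v\<in>S. Np d \<omega> v)"
proof -
  define N where "N v = {u. {u, v} \<in> edges d \<and> \<omega> {u, v}}" for v
  have "finite S"
    using assms finite_side finite_subset by (auto simp: Good_def)
  moreover have "finite (N v)" for v
  proof (rule finite_subset[OF _ finite_vertices])
    show "N v \<subseteq> vertices d"
      using edge_imp_hadj by (auto simp: N_def hadj_def)
  qed
  moreover have "N v \<inter> N w = {}" if "v \<in> S" "w \<in> S" "v \<noteq> w" for v w
  proof -
    have "\<not> two_nbrs d v w"
      using assms that by (auto simp: Good_def)
    then show ?thesis
      unfolding N_def two_nbrs_def by (blast dest: edge_imp_hadj hadj_sym)
  qed
  moreover have "{u. \<exists>v\<in>S. {u, v} \<in> edges d \<and> \<omega> {u, v}} = (\<Union>v\<in>S. N v)"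
    by (auto simp: N_def)
  ultimately show ?thesis
    by (simp add: NpS_def Np_def card_UN_disjoint flip: N_def)
qed

section \<open>Moments of Phi\<close>

lemma (in prob_space) variance_sum_uncorrelated:
  fixes X :: "'i \<Rightarrow> 'a \<Rightarrow> real"
  assumes "finite I"
    and integrable_mult: "\<And>i j. i \<in> I \<Longrightarrow> j \<in> I \<Longrightarrow> integrable M (\<lambda>\<omega>. X i \<omega> * X j \<omega>)"
    and integrable: "\<And>i. i \<in> I \<Longrightarrow> integrable M (X i)"
    and uncorrelated: "\<And>i j. i \<in> I \<Longrightarrow> j \<in> I \<Longrightarrow> i \<noteq> j \<Longrightarrow>
           expectation (\<lambda>\<omega>. X i \<omega> * X j \<omega>) = expectation (X i) * expectation (X j)"
  shows "variance (\<lambda>\<omega>. \<Sum>i\<in>I. X i \<omega>) = (\<Sum>i\<in>I. variance (X i))"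
proof -
  define cov where "cov i j = expectation (\<lambda>\<omega>. X i \<omega> * X j \<omega>) - expectation (X i) * expectation (X j)" for i j
  have "variance (\<lambda>\<omega>. \<Sum>i\<in>I. X i \<omega>)
      = expectation (\<lambda>\<omega>. (\<Sum>i\<in>I. X i \<omega>)\<^sup>2) - (expectation (\<lambda>\<omega>. \<Sum>i\<in>I. X i \<omega>))\<^sup>2"
    using integrable integrable_mult
    by (intro variance_eq) (auto simp: power2_eq_square sum_product)
  also have "\<dots> = (\<Sum>i\<in>I. \<Sum>j\<in>I. cov i j)"
    using integrable integrable_mult
    by (simp add: power2_eq_square sum_product cov_def sum_subtractf)
  also have "\<dots> = (\<Sum>i\<in>I. cov i i)"
  proof (rule sum.cong [OF refl])
    fix i
    assume i: "i \<in> I"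
    then have "(\<Sum>j\<in>I - {i}. cov i j) = 0"
      using uncorrelated by (intro sum.neutral) (auto simp: cov_def)
    then show "(\<Sum>j\<in>I. cov i j) = cov i i"
      using assms(1) i by (simp add: sum.remove)
  qed
  also have "\<dots> = (\<Sum>i\<in>I. variance (X i))"
  proof (rule sum.cong [OF refl])
    fix i
    assume "i \<in> I"
    then show "cov i i = variance (X i)"
      using integrable integrable_mult[of i i] by (subst variance_eq) (auto simp: cov_def power2_eq_square)
  qed
  finally show ?thesis .
qed

lemma expectation_Pi_bernoulli_pow_card:
  fixes c p :: real
  assumes "finite E" "A \<subseteq> E" "0 \<le> p" "p \<le> 1" "0 \<le> c"
  shows "measure_pmf.expectation (Pi_pmf E dflt (\<lambda>_. bernoulli_pmf p)) (\<lambda>\<omega>. c ^ card {e \<in> A. \<omega> e})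
         = (1 - p + p * c) ^ card A"
proof -
  have filter_A: "{e \<in> E. e \<in> A \<and> P e} = {e \<in> A. P e}" "{e \<in> E. e \<in> A} = A" for P
    using assms(2) by auto
  have "c ^ card {e \<in> A. \<omega> e} = (\<Prod>e\<in>E. if e \<in> A \<and> \<omega> e then c else 1)" for \<omega>
    using prod.inter_filter[OF assms(1), of "\<lambda>_. c" "\<lambda>e. e \<in> A \<and> \<omega> e"] by (simp add: filter_A)
  then have "measure_pmf.expectation (Pi_pmf E dflt (\<lambda>_. bernoulli_pmf p)) (\<lambda>\<omega>. c ^ card {e \<in> A. \<omega> e})
      = (\<Prod>e\<in>E. measure_pmf.expectation (bernoulli_pmf p) (\<lambda>b. if e \<in> A \<and> b then c else 1))"
    using assms(5) by (simp only:) (rule expectation_prod_Pi_pmf[OF assms(1)],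
      auto intro: integrable_measure_pmf_finite finite_subset[OF subset_UNIV])
  also have "\<dots> = (\<Prod>e\<in>E. if e \<in> A then 1 - p + p * c else 1)"
    using assms(3,4) by (intro prod.cong) (auto simp: algebra_simps)
  also have "\<dots> = (1 - p + p * c) ^ card A"
    using prod.inter_filter[OF assms(1), of "\<lambda>_. 1 - p + p * c" "\<lambda>e. e \<in> A"] by (simp add: filter_A)
  finally show ?thesis .
qed

lemma integrable_Qdp [simp]: "integrable (measure_pmf (Qdp d p)) (f :: _ \<Rightarrow> real)"
proof (rule integrable_measure_pmf_finite)
  have "set_pmf (Qdp d p) \<subseteq> PiE_dflt (edges d) False (set_pmf \<circ> (\<lambda>_. bernoulli_pmf p))"
    unfolding Qdp_def by (rule set_Pi_pmf_subset'[OF finite_edges])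
  moreover have "finite (PiE_dflt (edges d) False (set_pmf \<circ> (\<lambda>_. bernoulli_pmf p)))"
    by (rule finite_PiE_dflt[OF finite_edges]) (auto intro: finite_subset[OF subset_UNIV])
  ultimately show "finite (set_pmf (Qdp d p))"
    by (rule finite_subset)
qed

lemma expectation_Qdp_pow_card:
  fixes c p :: real
  assumes "A \<subseteq> edges d" "0 \<le> p" "p \<le> 1" "0 \<le> c"
  shows "measure_pmf.expectation (Qdp d p) (\<lambda>\<omega>. c ^ card {e \<in> A. \<omega> e}) = (1 - p + p * c) ^ card A"
  unfolding Qdp_def by (rule expectation_Pi_bernoulli_pow_card[OF finite_edges assms])

lemma inverse_pow_Np: "1 / 2 ^ Np d \<omega> v = (1 / 2 :: real) ^ card {e \<in> incident d v. \<omega> e}"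
  by (simp add: Np_eq_card_incident power_one_over)

lemma expectation_inverse_pow_Np:
  assumes "0 \<le> p" "p \<le> 1"
  shows "measure_pmf.expectation (Qdp d p) (\<lambda>\<omega>. 1 / 2 ^ Np d \<omega> v) = (1 - p / 2) ^ card (incident d v)"
  using expectation_Qdp_pow_card[OF incident_subset_edges assms, of "1/2"]
  by (simp add: inverse_pow_Np)

lemma expectation_inverse_pow_Np_squared:
  assumes "0 \<le> p" "p \<le> 1"
  shows "measure_pmf.expectation (Qdp d p) (\<lambda>\<omega>. (1 / 2 ^ Np d \<omega> v)\<^sup>2) = (1 - 3 * p / 4) ^ card (incident d v)"
proof -
  have "(1 / 2 ^ Np d \<omega> v :: real)\<^sup>2 = (1 / 4) ^ card {e \<in> incident d v. \<omega> e}" for \<omega>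
    by (simp add: inverse_pow_Np power2_eq_square flip: power_mult_distrib)
  then show ?thesis
    using expectation_Qdp_pow_card[OF incident_subset_edges assms, of "1/4"] by simp
qed

lemma expectation_inverse_pow_Np_mult:
  assumes "0 \<le> p" "p \<le> 1" "v \<in> side d b" "w \<in> side d b" "v \<noteq> w"
  shows "measure_pmf.expectation (Qdp d p) (\<lambda>\<omega>. 1 / 2 ^ Np d \<omega> v * (1 / 2 ^ Np d \<omega> w :: real))
       = measure_pmf.expectation (Qdp d p) (\<lambda>\<omega>. 1 / 2 ^ Np d \<omega> v)
         * measure_pmf.expectation (Qdp d p) (\<lambda>\<omega>. 1 / 2 ^ Np d \<omega> w)"
proof -
  have disj: "incident d v \<inter> incident d w = {}"
    using edge_not_within_side[OF assms(3-5)] by (auto simp: incident_def)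
  have fin: "finite (incident d u)" for u
    using finite_subset[OF incident_subset_edges finite_edges] .
  have "card {e \<in> incident d v \<union> incident d w. \<omega> e}
      = card {e \<in> incident d v. \<omega> e} + card {e \<in> incident d w. \<omega> e}" for \<omega>
    using disj fin by (subst card_Un_disjoint[symmetric]) (auto intro: arg_cong[where f = card])
  then have "1 / 2 ^ Np d \<omega> v * (1 / 2 ^ Np d \<omega> w)
      = (1 / 2 :: real) ^ card {e \<in> incident d v \<union> incident d w. \<omega> e}" for \<omega>
    by (simp add: inverse_pow_Np power_add)
  then have "measure_pmf.expectation (Qdp d p) (\<lambda>\<omega>. 1 / 2 ^ Np d \<omega> v * (1 / 2 ^ Np d \<omega> w))
      = measure_pmf.expectation (Qdp d p) (\<lambda>\<omega>. (1 / 2 :: real) ^ card {e \<in> incident d v \<union> incident d w. \<omega> e})"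
    by (simp only:)
  also have "\<dots> = (1 - p / 2) ^ card (incident d v \<union> incident d w)"
    using incident_subset_edges assms(1,2) by (subst expectation_Qdp_pow_card) auto
  also have "\<dots> = (1 - p / 2) ^ card (incident d v) * (1 - p / 2) ^ card (incident d w)"
    using disj fin by (simp add: card_Un_disjoint power_add)
  finally show ?thesis
    using assms(1,2) by (simp add: expectation_inverse_pow_Np)
qed

lemma expectation_Phi_le:
  assumes "0 \<le> p" "p \<le> 1" "1 \<le> d"
  shows "measure_pmf.expectation (Qdp d p) (Phi d b) \<le> mu p d"
proof -
  have "measure_pmf.expectation (Qdp d p) (Phi d b) = (\<Sum>v\<in>side d b. (1 - p / 2) ^ card (incident d v))"
    unfolding Phi_def[abs_def] using assms by (simp add: expectation_inverse_pow_Np)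
  also have "\<dots> \<le> (2 * (1 - p / 2)) ^ d / 2"
    using assms by (intro sum_side_power_card_incident_le) auto
  also have "\<dots> = mu p d"
    by (simp add: mu_def algebra_simps)
  finally show ?thesis .
qed

lemma variance_Phi_le:
  assumes "2 / 3 \<le> p" "p \<le> 1" "1 \<le> d"
  shows "measure_pmf.variance (Qdp d p) (Phi d b) \<le> 1 / 2"
proof -
  have "measure_pmf.variance (Qdp d p) (Phi d b)
      = (\<Sum>v\<in>side d b. measure_pmf.variance (Qdp d p) (\<lambda>\<omega>. 1 / 2 ^ Np d \<omega> v))"
    unfolding Phi_def[abs_def]
    using expectation_inverse_pow_Np_mult[where p = p and d = d and b = b] assms
    by (intro measure_pmf.variance_sum_uncorrelated) (simp_all add: finite_side)
  also have "\<dots> \<le> (\<Sum>v\<in>side d b. measure_pmf.expectation (Qdp d p) (\<lambda>\<omega>. (1 / 2 ^ Np d \<omega> v)\<^sup>2))"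
    by (intro sum_mono) (simp add: measure_pmf.variance_eq)
  also have "\<dots> = (\<Sum>v\<in>side d b. (1 - 3 * p / 4) ^ card (incident d v))"
    using assms by (simp add: expectation_inverse_pow_Np_squared)
  also have "\<dots> \<le> (2 * (1 - 3 * p / 4)) ^ d / 2"
    using assms by (intro sum_side_power_card_incident_le) auto
  also have "\<dots> \<le> 1 / 2"
    using assms by (simp add: power_le_one)
  finally show ?thesis .
qed

lemma prob_Phi_gt_mu_add:
  assumes "2 / 3 \<le> p" "p \<le> 1" "1 \<le> d" "0 < \<eta>"
  shows "measure_pmf.prob (Qdp d p) {\<omega>. mu p d + \<eta> < Phi d b \<omega>} \<le> 1 / (2 * \<eta>\<^sup>2)"
proof -
  let ?E = "measure_pmf.expectation (Qdp d p) (Phi d b)"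
  have "{\<omega>. mu p d + \<eta> < Phi d b \<omega>} \<subseteq> {\<omega> \<in> space (measure_pmf (Qdp d p)). \<eta> \<le> \<bar>Phi d b \<omega> - ?E\<bar>}"
    using expectation_Phi_le[of p d b] assms by auto
  then have "measure_pmf.prob (Qdp d p) {\<omega>. mu p d + \<eta> < Phi d b \<omega>}
      \<le> measure_pmf.prob (Qdp d p) {\<omega> \<in> space (measure_pmf (Qdp d p)). \<eta> \<le> \<bar>Phi d b \<omega> - ?E\<bar>}"
    by (intro measure_pmf.finite_measure_mono) simp_all
  also have "\<dots> \<le> measure_pmf.variance (Qdp d p) (Phi d b) / \<eta>\<^sup>2"
    using assms(4) by (intro measure_pmf.Chebyshev_inequality) simp_all
  also have "\<dots> \<le> (1 / 2) / \<eta>\<^sup>2"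
    using variance_Phi_le[OF assms(1-3)] by (intro divide_right_mono) simp_all
  finally show ?thesis
    by simp
qed

lemma sum_Good_le_Phi_power: "(\<Sum>S\<in>Good d b m. 1 / 2 ^ NpS d \<omega> S) \<le> Phi d b \<omega> ^ m / fact m"
proof -
  have "(\<Sum>S\<in>Good d b m. 1 / 2 ^ NpS d \<omega> S) = (\<Sum>S\<in>Good d b m. \<Prod>v\<in>S. 1 / 2 ^ Np d \<omega> v :: real)"
    by (intro sum.cong refl) (simp add: NpS_eq_sum_Np power_sum prod_dividef)
  also have "\<dots> \<le> (\<Sum>S | S \<subseteq> side d b \<and> card S = m. \<Prod>v\<in>S. 1 / 2 ^ Np d \<omega> v)"
    using finite_side by (intro sum_mono2 prod_nonneg) (auto simp: Good_def)
  also have "\<dots> \<le> Phi d b \<omega> ^ m / fact m"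
    unfolding Phi_def by (intro sum_prod_card_subsets_le finite_side) auto
  finally show ?thesis .
qed

lemma sigma_nonneg: "p \<le> 4 / 3 \<Longrightarrow> 0 \<le> sigma p d"
  by (simp add: sigma_def)

lemma abs_X2_le_X1:
  assumes "p \<le> 4 / 3"
  shows "\<bar>X2 p d b \<omega>\<bar> \<le> X1 p d b \<omega>"
proof -
  define t1 where "t1 m = (if m \<notin> Window p d then Phi d b \<omega> ^ m / fact m else 0)" for m
  define t2 where "t2 m = (if m \<notin> Window p d then \<Sum>S\<in>Good d b m. 1 / 2 ^ NpS d \<omega> S else 0 :: real)" for m
  have "0 \<le> Phi d b \<omega>"
    by (simp add: Phi_def sum_nonneg)
  have t2_nonneg: "0 \<le> t2 m" and t2_le: "t2 m \<le> t1 m" for m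
    using sum_Good_le_Phi_power[where d = d and b = b and m = m and \<omega> = \<omega>] by (simp_all add: t1_def t2_def sum_nonneg)
  have "summable t1"
    unfolding t1_def by (rule summable_exp_series_if)
  then have "summable t2"
    by (rule summable_comparison_test') (use t2_nonneg t2_le in auto)
  have "0 \<le> suminf t2" "suminf t2 \<le> suminf t1"
    using t2_nonneg t2_le \<open>summable t1\<close> \<open>summable t2\<close> by (auto intro: suminf_nonneg suminf_le)
  moreover have "0 \<le> sigma p d * exp (mu p d)"
    using sigma_nonneg[OF assms] by simp
  ultimately show ?thesis
    unfolding X1_def X2_def by (fold t1_def t2_def) (simp add: divide_right_mono)
qed

lemma X1_le:
  assumes "p \<le> 4 / 3" "1 \<le> mu p d" "Phi d b \<omega> \<le> mu p d + mu p d powr 0.2 / 16"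
  shows "X1 p d b \<omega> \<le> 2 * exp (- (mu p d powr 0.2 / 8)) / sigma p d"
proof -
  define \<mu> where "\<mu> = mu p d"
  define \<delta> where "\<delta> = \<mu> powr 0.6"
  have "0 < \<mu>"
    using assms(2) by (simp add: \<mu>_def)
  have "\<delta>\<^sup>2 / \<mu> = \<mu> powr (2 * 0.6) / \<mu> powr 1"
    using \<open>0 < \<mu>\<close> by (simp add: \<delta>_def powr_power)
  also have "\<dots> = \<mu> powr (2 * 0.6 - 1)"
    by (rule powr_diff[symmetric])
  finally have ratio: "\<delta>\<^sup>2 / (c * \<mu>) = \<mu> powr 0.2 / c" for c
    by (simp add: mult.commute flip: divide_divide_eq_left)
  have "\<delta> \<le> \<mu>"
    using assms(2) powr_mono[where a = "0.6" and b = 1 and x = \<mu>] by (simp add: \<delta>_def \<mu>_def)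
  have "(m \<notin> Window p d) = (\<delta> < \<bar>real m - \<mu>\<bar>)" for m
    by (auto simp: Window_def \<delta>_def \<mu>_def)
  then have "(\<Sum>m. if m \<notin> Window p d then Phi d b \<omega> ^ m / fact m else 0)
      = (\<Sum>m. if \<delta> < \<bar>real m - \<mu>\<bar> then Phi d b \<omega> ^ m / fact m else 0)"
    by (simp only:)
  also have "\<dots> \<le> 2 * exp (\<mu> - \<delta>\<^sup>2 / (8 * \<mu>))"
  proof (rule exp_series_outside_window_le)
    show "0 < \<delta>" "\<delta> \<le> \<mu>" "0 \<le> Phi d b \<omega>"
      using \<open>0 < \<mu>\<close> \<open>\<delta> \<le> \<mu>\<close> by (simp_all add: \<delta>_def Phi_def sum_nonneg)
    show "Phi d b \<omega> \<le> \<mu> + \<delta>\<^sup>2 / (16 * \<mu>)"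
      unfolding ratio using assms(3) by (simp add: \<mu>_def)
  qed
  finally have "(\<Sum>m. if m \<notin> Window p d then Phi d b \<omega> ^ m / fact m else 0) \<le> 2 * exp (\<mu> - \<mu> powr 0.2 / 8)"
    by (simp only: ratio)
  then have "X1 p d b \<omega> \<le> 2 * exp (\<mu> - \<mu> powr 0.2 / 8) / (sigma p d * exp \<mu>)"
    unfolding X1_def \<mu>_def using sigma_nonneg[OF assms(1)] by (intro divide_right_mono) auto
  also have "exp (\<mu> - \<mu> powr 0.2 / 8) = exp (- (\<mu> powr 0.2 / 8)) * exp \<mu>"
    by (simp flip: exp_add)
  finally show ?thesis
    by (simp add: \<mu>_def)
qed

lemma prob_abs_X_gt_le:
  assumes "2 / 3 \<le> p" "p < 1" "1 \<le> d" "1 \<le> mu p d"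
    and "2 * exp (- (mu p d powr 0.2 / 8)) / sigma p d \<le> \<epsilon>"
  shows "measure_pmf.prob (Qdp d p) {\<omega>. \<epsilon> < \<bar>X1 p d b \<omega>\<bar>} \<le> 1 / (2 * (mu p d powr 0.2 / 16)\<^sup>2)"
    and "measure_pmf.prob (Qdp d p) {\<omega>. \<epsilon> < \<bar>X2 p d b \<omega>\<bar>} \<le> 1 / (2 * (mu p d powr 0.2 / 16)\<^sup>2)"
proof -
  have X1_nonneg: "0 \<le> X1 p d b \<omega>" for \<omega>
    using abs_X2_le_X1[of p d b \<omega>] assms(2) by linarith
  have X1_event: "{\<omega>. \<epsilon> < \<bar>X1 p d b \<omega>\<bar>} \<subseteq> {\<omega>. mu p d + mu p d powr 0.2 / 16 < Phi d b \<omega>}"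
  proof (intro subsetI, unfold mem_Collect_eq)
    fix \<omega>
    assume X1_gt: "\<epsilon> < \<bar>X1 p d b \<omega>\<bar>"
    show "mu p d + mu p d powr 0.2 / 16 < Phi d b \<omega>"
    proof (rule ccontr)
      assume "\<not> ?thesis"
      then have "X1 p d b \<omega> \<le> 2 * exp (- (mu p d powr 0.2 / 8)) / sigma p d"
        using assms(2,4) by (intro X1_le) auto
      then show False
        using X1_gt X1_nonneg[of \<omega>] assms(5) by linarith
    qed
  qed
  have "\<bar>X2 p d b \<omega>\<bar> \<le> \<bar>X1 p d b \<omega>\<bar>" for \<omega>
    using abs_X2_le_X1[of p d b \<omega>] X1_nonneg[of \<omega>] assms(2) by simp
  then have X2_event: "{\<omega>. \<epsilon> < \<bar>X2 p d b \<omega>\<bar>} \<subseteq> {\<omega>. \<epsilon> < \<bar>X1 p d b \<omega>\<bar>}"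
    by (auto intro: less_le_trans)
  have "measure_pmf.prob (Qdp d p) {\<omega>. \<epsilon> < \<bar>X1 p d b \<omega>\<bar>}
      \<le> measure_pmf.prob (Qdp d p) {\<omega>. mu p d + mu p d powr 0.2 / 16 < Phi d b \<omega>}"
    using X1_event by (rule measure_pmf.finite_measure_mono) simp
  also have "\<dots> \<le> 1 / (2 * (mu p d powr 0.2 / 16)\<^sup>2)"
    using assms by (intro prob_Phi_gt_mu_add) auto
  finally show "measure_pmf.prob (Qdp d p) {\<omega>. \<epsilon> < \<bar>X1 p d b \<omega>\<bar>} \<le> 1 / (2 * (mu p d powr 0.2 / 16)\<^sup>2)" .
  moreover have "measure_pmf.prob (Qdp d p) {\<omega>. \<epsilon> < \<bar>X2 p d b \<omega>\<bar>} \<le> measure_pmf.prob (Qdp d p) {\<omega>. \<epsilon> < \<bar>X1 p d b \<omega>\<bar>}"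
    using X2_event by (rule measure_pmf.finite_measure_mono) simp
  ultimately show "measure_pmf.prob (Qdp d p) {\<omega>. \<epsilon> < \<bar>X2 p d b \<omega>\<bar>} \<le> 1 / (2 * (mu p d powr 0.2 / 16)\<^sup>2)"
    by linarith
qed

section \<open>Asymptotics in the dimension\<close>

lemma mu_eq_powr: "p < 2 \<Longrightarrow> mu p d = (2 - p) powr real d / 2"
  by (simp add: mu_def powr_realpow)

lemma sigma_eq_powr: "p < 4 / 3 \<Longrightarrow> sigma p d = sqrt (((4 - 3 * p) / 2) powr real d / 2)"
  by (simp add: sigma_def powr_realpow)

lemma mu_at_top:
  assumes "p < 1"
  shows "filterlim (mu p) at_top sequentially"
proof -
  have "1 < 2 - p"
    using assms by simp
  then have "filterlim (\<lambda>d::nat. (2 - p) powr real d / 2) at_top sequentially"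
    by real_asymp
  moreover have "mu p = (\<lambda>d. (2 - p) powr real d / 2)"
    using assms by (simp add: mu_eq_powr fun_eq_iff)
  ultimately show ?thesis
    by simp
qed

lemma exp_mu_powr_div_sigma_tendsto_zero:
  assumes "p < 1"
  shows "(\<lambda>d. 2 * exp (- (mu p d powr 0.2 / 8)) / sigma p d) \<longlonglongrightarrow> 0"
proof -
  have "1 < 2 - p" "0 < (4 - 3 * p) / 2"
    using assms by simp_all
  then have "(\<lambda>d::nat. 2 * exp (- (((2 - p) powr real d / 2) powr 0.2 / 8)) / sqrt (((4 - 3 * p) / 2) powr real d / 2))
      \<longlonglongrightarrow> 0"
    by real_asymp
  then show ?thesis
    using assms by (simp add: mu_eq_powr sigma_eq_powr)
qed

theorem lemma5p2:
  fixes p :: real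
  assumes "2/3 \<le> p" and "p < 1"
  shows "\<forall>b::bool. \<forall>\<epsilon>>0.
    ((\<lambda>d. measure_pmf.prob (Qdp d p) {\<omega>. \<bar>X1 p d b \<omega>\<bar> > \<epsilon>}) \<longlonglongrightarrow> 0) \<and>
    ((\<lambda>d. measure_pmf.prob (Qdp d p) {\<omega>. \<bar>X2 p d b \<omega>\<bar> > \<epsilon>}) \<longlonglongrightarrow> 0)"
proof (intro allI impI)
  fix b :: bool and \<epsilon> :: real
  assume "0 < \<epsilon>"
  let ?B = "\<lambda>d. 1 / (2 * (mu p d powr 0.2 / 16)\<^sup>2)"
  have "\<forall>\<^sub>F d in sequentially. 1 \<le> d \<and> 1 \<le> mu p d \<and> 2 * exp (- (mu p d powr 0.2 / 8)) / sigma p d \<le> \<epsilon>"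
    using eventually_ge_at_top[of 1] filterlim_at_top[THEN iffD1, OF mu_at_top[OF assms(2)], rule_format, of 1]
      order_tendstoD(2)[OF exp_mu_powr_div_sigma_tendsto_zero[OF assms(2)] \<open>0 < \<epsilon>\<close>]
    by eventually_elim auto
  then have bound: "\<forall>\<^sub>F d in sequentially. measure_pmf.prob (Qdp d p) {\<omega>. \<epsilon> < \<bar>X1 p d b \<omega>\<bar>} \<le> ?B d
      \<and> measure_pmf.prob (Qdp d p) {\<omega>. \<epsilon> < \<bar>X2 p d b \<omega>\<bar>} \<le> ?B d"
    by (rule eventually_mono) (use prob_abs_X_gt_le[OF assms] in blast)
  have "((\<lambda>x::real. 1 / (2 * (x powr 0.2 / 16)\<^sup>2)) \<longlongrightarrow> 0) at_top"
    by real_asymp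
  from filterlim_compose[OF this mu_at_top[OF assms(2)]] have B_lim: "?B \<longlonglongrightarrow> 0" .
  have "(\<lambda>d. measure_pmf.prob (Qdp d p) {\<omega>. \<epsilon> < \<bar>X1 p d b \<omega>\<bar>}) \<longlonglongrightarrow> 0"
    using bound by (intro tendsto_sandwich[OF _ _ tendsto_const B_lim]) (auto elim: eventually_mono)
  moreover have "(\<lambda>d. measure_pmf.prob (Qdp d p) {\<omega>. \<epsilon> < \<bar>X2 p d b \<omega>\<bar>}) \<longlonglongrightarrow> 0"
    using bound by (intro tendsto_sandwich[OF _ _ tendsto_const B_lim]) (auto elim: eventually_mono)
  ultimately show "((\<lambda>d. measure_pmf.prob (Qdp d p) {\<omega>. \<bar>X1 p d b \<omega>\<bar> > \<epsilon>}) \<longlonglongrightarrow> 0) \<and>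
    ((\<lambda>d. measure_pmf.prob (Qdp d p) {\<omega>. \<bar>X2 p d b \<omega>\<bar> > \<epsilon>}) \<longlonglongrightarrow> 0)"
    by simp
qed

end
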